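(* Let $(X,d_X)$ be a discrete countable metric space, $Y$ a countable set, and $d_1,d_2$ two metrics on $X\sqcup Y$ with $d_1|_X=d_2|_X=d_X$ and $d_1|_Y=d_2|_Y$. Then $d_1$ and $d_2$ are coarsely equivalent if and only if $M_{Y,d_1}=M_{Y,d_2}$ (as subsets of $\mathbb B(H_X,H_Y)$).
   Context: $H_X=\ell^2(X)$, $H_Y=\ell^2(Y)$ with standard bases $\{\delta_x\}$, $\{\delta_y\}$. For a metric $d$ on $X\sqcup Y$ extending $d_X$, a bounded operator $T:H_X\to H_Y$ has propagation at most $L$ if $d(x,y)\ge L$ implies $(\delta_y,T\delta_x)=0$; $M_{Y,d}$ is the norm closure in $\mathbb B(H_X,H_Y)$ of bounded operators $H_X\to H_Y$ of finite propagation. Two metrics $d_1,d_2$ on a set $Z$ are coarsely equivalent if there is a monotonically increasing function $\varphi:[0,\infty)\to[0,\infty)$ with $\lim_{t\to\infty}\varphi(t)=\infty$ such that $d_1(z,z')\le\varphi(d_2(z,z'))$ and $d_2(z,z')\le\varphi(d_1(z,z'))$ for all $z,z'\in Z$. *)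

theory Defs
  imports "HOL-Analysis.Analysis"
begin

definition is_metric :: "('z \<Rightarrow> 'z \<Rightarrow> real) \<Rightarrow> bool" where
  "is_metric d \<longleftrightarrow>
     (\<forall>z z'. 0 \<le> d z z') \<and> (\<forall>z z'. d z z' = 0 \<longleftrightarrow> z = z') \<and>
     (\<forall>z z'. d z z' = d z' z) \<and> (\<forall>z z' z''. d z z'' \<le> d z z' + d z' z'')"

definition discrete_metric :: "('z \<Rightarrow> 'z \<Rightarrow> real) \<Rightarrow> bool" where
  "discrete_metric d \<longleftrightarrow> (\<forall>z. \<exists>e>0. \<forall>z'. d z z' < e \<longrightarrow> z' = z)"

definition ell2 :: "('a \<Rightarrow> complex) set" where
  "ell2 = {f. (\<lambda>x. (norm (f x))\<^sup>2) summable_on UNIV}"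

definition ell2_norm :: "('a \<Rightarrow> complex) \<Rightarrow> real" where
  "ell2_norm f = sqrt (\<Sum>\<^sub>\<infinity>x. (norm (f x))\<^sup>2)"

definition delta :: "'a \<Rightarrow> 'a \<Rightarrow> complex" where
  "delta x = (\<lambda>x'. if x' = x then 1 else 0)"

text \<open>Bounded linear operators ell^2(X) -> ell^2(Y); only their values on ell^2(X) matter.\<close>
definition bounded_op :: "(('a \<Rightarrow> complex) \<Rightarrow> ('b \<Rightarrow> complex)) \<Rightarrow> bool" where
  "bounded_op T \<longleftrightarrow>
     (\<forall>f\<in>ell2. T f \<in> ell2) \<and>
     (\<forall>f\<in>ell2. \<forall>g\<in>ell2. T (\<lambda>x. f x + g x) = (\<lambda>y. T f y + T g y)) \<and>
     (\<forall>f\<in>ell2. \<forall>c. T (\<lambda>x. c * f x) = (\<lambda>y. c * T f y)) \<and>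
     (\<exists>C. \<forall>f\<in>ell2. ell2_norm (T f) \<le> C * ell2_norm f)"

definition has_propagation_le ::
  "('a + 'b \<Rightarrow> 'a + 'b \<Rightarrow> real) \<Rightarrow> real \<Rightarrow> (('a \<Rightarrow> complex) \<Rightarrow> ('b \<Rightarrow> complex)) \<Rightarrow> bool" where
  "has_propagation_le d L T \<longleftrightarrow> (\<forall>x y. d (Inl x) (Inr y) \<ge> L \<longrightarrow> T (delta x) y = 0)"

definition finite_propagation ::
  "('a + 'b \<Rightarrow> 'a + 'b \<Rightarrow> real) \<Rightarrow> (('a \<Rightarrow> complex) \<Rightarrow> ('b \<Rightarrow> complex)) \<Rightarrow> bool" where
  "finite_propagation d T \<longleftrightarrow> (\<exists>L. has_propagation_le d L T)"

text \<open>M_{Y,d}: norm closure in B(H_X,H_Y) of the bounded finite-propagation operators.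
  T lies in the closure iff for every eps > 0 there is such an S with operator norm of T - S
  at most eps.\<close>
definition M_space ::
  "('a + 'b \<Rightarrow> 'a + 'b \<Rightarrow> real) \<Rightarrow> (('a \<Rightarrow> complex) \<Rightarrow> ('b \<Rightarrow> complex)) set" where
  "M_space d = {T. bounded_op T \<and>
     (\<forall>\<epsilon>>0. \<exists>S. bounded_op S \<and> finite_propagation d S \<and>
        (\<forall>f\<in>ell2. ell2_norm (\<lambda>y. T f y - S f y) \<le> \<epsilon> * ell2_norm f))}"

definition coarsely_equivalent :: "('z \<Rightarrow> 'z \<Rightarrow> real) \<Rightarrow> ('z \<Rightarrow> 'z \<Rightarrow> real) \<Rightarrow> bool" where
  "coarsely_equivalent d1 d2 \<longleftrightarrow>
     (\<exists>\<phi>::real \<Rightarrow> real. mono_on {0..} \<phi> \<and> (\<forall>t\<ge>0. \<phi> t \<ge> 0) \<and> filterlim \<phi> at_top at_top \<and>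
        (\<forall>z z'. d1 z z' \<le> \<phi> (d2 z z') \<and> d2 z z' \<le> \<phi> (d1 z z')))"

end

theory Submission
  imports Defs
begin

(* If d2 is coarsely dominated by d1, every operator of finite d1-propagation has finite
   d2-propagation, so coarse equivalence gives equal M-spaces.  Conversely, if d2 is unbounded on
   the pairs of d1-distance at most R, there are pairs (x_n, y_n) in X x Y with d1(x_n, y_n) <= R
   and d2(x_n, y_n) growing so fast that both coordinates are injective (the metrics agree on X and
   on Y).  The partial isometry delta_(x_n) |-> delta_(y_n) then has d1-propagation at most R + 1,
   while every operator of finite d2-propagation is at distance at least 1 from it. *)

lemma ell2_norm_nonneg: "0 \<le> ell2_norm f"
  unfolding ell2_norm_def by (simp add: infsum_nonneg)

lemma delta_in_ell2: "delta x \<in> ell2"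
proof -
  have "(\<lambda>x'. (norm (delta x x'))\<^sup>2) summable_on UNIV \<longleftrightarrow> (\<lambda>x'. (norm (delta x x'))\<^sup>2) summable_on {x}"
    by (rule summable_on_cong_neutral) (auto simp: delta_def)
  then show ?thesis unfolding ell2_def by simp
qed

lemma ell2_norm_delta: "ell2_norm (delta x) = 1"
proof -
  have "(\<Sum>\<^sub>\<infinity>x'. (norm (delta x x'))\<^sup>2) = (\<Sum>\<^sub>\<infinity>x'\<in>{x}. (norm (delta x x'))\<^sup>2)"
    by (rule infsum_cong_neutral) (auto simp: delta_def)
  then show ?thesis unfolding ell2_norm_def by (simp add: delta_def)
qed

lemma ell2_diff:
  assumes "f \<in> ell2" "g \<in> ell2"
  shows "(\<lambda>y. f y - g y) \<in> ell2"
proof -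
  have bound: "(norm (f y - g y))\<^sup>2 \<le> 2 * (norm (f y))\<^sup>2 + 2 * (norm (g y))\<^sup>2" for y
  proof -
    have "(norm (f y - g y))\<^sup>2 \<le> (norm (f y) + norm (g y))\<^sup>2"
      by (simp add: norm_triangle_ineq4 power_mono)
    also have "\<dots> \<le> 2 * (norm (f y))\<^sup>2 + 2 * (norm (g y))\<^sup>2"
      using zero_le_power2[of "norm (f y) - norm (g y)"] by (simp add: power2_eq_square algebra_simps)
    finally show ?thesis .
  qed
  have "(\<lambda>y. 2 * (norm (f y))\<^sup>2 + 2 * (norm (g y))\<^sup>2) summable_on UNIV"
    using assms unfolding ell2_def by (intro summable_on_add summable_on_cmult_right) auto
  then show ?thesis
    unfolding ell2_def by (auto intro: summable_on_comparison_test bound)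
qed

lemma norm_le_ell2_norm:
  assumes "f \<in> ell2"
  shows "norm (f y) \<le> ell2_norm f"
proof -
  have "(\<lambda>y. (norm (f y))\<^sup>2) summable_on UNIV" using assms unfolding ell2_def by simp
  then have "(\<Sum>\<^sub>\<infinity>y'\<in>{y}. (norm (f y'))\<^sup>2) \<le> (\<Sum>\<^sub>\<infinity>y'. (norm (f y'))\<^sup>2)"
    by (intro infsum_mono2) auto
  then show ?thesis unfolding ell2_norm_def by (simp add: real_le_rsqrt)
qed

lemma bounded_op_ell2: "bounded_op T \<Longrightarrow> f \<in> ell2 \<Longrightarrow> T f \<in> ell2"
  unfolding bounded_op_def by blast

definition pullback_op :: "('b \<Rightarrow> 'a) \<Rightarrow> 'b set \<Rightarrow> ('a \<Rightarrow> complex) \<Rightarrow> ('b \<Rightarrow> complex)" where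
  "pullback_op g B h = (\<lambda>y. if y \<in> B then h (g y) else 0)"

lemma pullback_op_delta: "pullback_op g B (delta x) y = (if y \<in> B \<and> g y = x then 1 else 0)"
  by (simp add: pullback_op_def delta_def)

lemma pullback_op_ell2:
  assumes inj: "inj_on g B" and h: "h \<in> ell2"
  shows "pullback_op g B h \<in> ell2" and "ell2_norm (pullback_op g B h) \<le> ell2_norm h"
proof -
  define q where "q x = (norm (h x))\<^sup>2" for x
  have q: "q summable_on UNIV" using h unfolding ell2_def q_def by simp
  then have "q summable_on g ` B" by (rule summable_on_subset_banach) simp
  then have qg: "(q \<circ> g) summable_on B" using summable_on_reindex[OF inj] by blast
  have "(\<lambda>y. (norm (pullback_op g B h y))\<^sup>2) summable_on UNIV \<longleftrightarrow> (q \<circ> g) summable_on B"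
    by (rule summable_on_cong_neutral) (auto simp: pullback_op_def q_def)
  then show "pullback_op g B h \<in> ell2" using qg unfolding ell2_def by simp
  have "(\<Sum>\<^sub>\<infinity>y. (norm (pullback_op g B h y))\<^sup>2) = infsum (q \<circ> g) B"
    by (rule infsum_cong_neutral) (auto simp: pullback_op_def q_def)
  also have "\<dots> = infsum q (g ` B)" by (rule infsum_reindex[OF inj, symmetric])
  also have "\<dots> \<le> infsum q UNIV"
    using q \<open>q summable_on g ` B\<close> by (intro infsum_mono2) (auto simp: q_def)
  finally show "ell2_norm (pullback_op g B h) \<le> ell2_norm h"
    unfolding ell2_norm_def q_def by (rule real_sqrt_le_mono)
qed

lemma bounded_op_pullback_op:
  fixes g :: "'b \<Rightarrow> 'a"
  assumes "inj_on g B"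
  shows "bounded_op (pullback_op g B)"
  unfolding bounded_op_def
proof (intro conjI ballI allI exI)
  fix f :: "'a \<Rightarrow> complex" assume "f \<in> ell2"
  then show "pullback_op g B f \<in> ell2" "ell2_norm (pullback_op g B f) \<le> 1 * ell2_norm f"
    using pullback_op_ell2[OF assms] by simp_all
qed (auto simp: pullback_op_def)

lemma has_propagation_le_pullback_op:
  assumes "\<And>y. y \<in> B \<Longrightarrow> d (Inl (g y)) (Inr y) < L"
  shows "has_propagation_le d L (pullback_op g B)"
  using assms by (force simp: has_propagation_le_def pullback_op_delta)

lemma M_space_eqI:
  assumes "\<And>S. bounded_op S \<Longrightarrow> finite_propagation d1 S \<longleftrightarrow> finite_propagation d2 S"
  shows "M_space d1 = M_space d2"
  unfolding M_space_def using assms by (simp cong: conj_cong)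

lemma M_space_memI:
  assumes "bounded_op T" and "finite_propagation d T"
  shows "T \<in> M_space d"
proof -
  have "ell2_norm (\<lambda>y. T f y - T f y) \<le> \<epsilon> * ell2_norm f" if "0 < \<epsilon>" for \<epsilon> f
    using that ell2_norm_nonneg[of f] by (simp add: ell2_norm_def)
  then show ?thesis unfolding M_space_def using assms by blast
qed

lemma not_in_M_space:
  assumes T: "bounded_op T"
    and far: "\<And>L. \<exists>x y. L \<le> d (Inl x) (Inr y) \<and> 1 \<le> norm (T (delta x) y)"
  shows "T \<notin> M_space d"
proof
  assume "T \<in> M_space d"
  then have "\<forall>\<epsilon>>0. \<exists>S. bounded_op S \<and> finite_propagation d S \<and>
      (\<forall>f\<in>ell2. ell2_norm (\<lambda>y. T f y - S f y) \<le> \<epsilon> * ell2_norm f)"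
    unfolding M_space_def by simp
  then obtain S where S: "bounded_op S" "finite_propagation d S"
    and close: "\<And>f. f \<in> ell2 \<Longrightarrow> ell2_norm (\<lambda>y. T f y - S f y) \<le> 1/2 * ell2_norm f"
    by (meson half_gt_zero_iff zero_less_one)
  obtain L where "has_propagation_le d L S" using S(2) unfolding finite_propagation_def by blast
  moreover obtain x y where "L \<le> d (Inl x) (Inr y)" and Txy: "1 \<le> norm (T (delta x) y)"
    using far by blast
  ultimately have Sxy: "S (delta x) y = 0" unfolding has_propagation_le_def by blast
  have "T (delta x) \<in> ell2" "S (delta x) \<in> ell2"
    by (fact bounded_op_ell2[OF T delta_in_ell2] bounded_op_ell2[OF S(1) delta_in_ell2])+
  then have "norm (T (delta x) y - S (delta x) y) \<le> ell2_norm (\<lambda>y. T (delta x) y - S (delta x) y)"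
    by (intro norm_le_ell2_norm ell2_diff)
  also have "\<dots> \<le> 1/2" using close[OF delta_in_ell2] by (simp add: ell2_norm_delta)
  finally show False using Txy Sxy by simp
qed

lemma finite_propagation_coarse_mono:
  assumes mono: "mono_on {0..} \<phi>"
    and nonneg: "\<And>z z'. 0 \<le> d1 z z'"
    and dom: "\<And>z z'. d2 z z' \<le> \<phi> (d1 z z')"
    and "finite_propagation d1 S"
  shows "finite_propagation d2 S"
proof -
  obtain L where L: "has_propagation_le d1 L S"
    using assms(4) unfolding finite_propagation_def by blast
  have "S (delta x) y = 0" if far: "\<phi> (max L 0) + 1 \<le> d2 (Inl x) (Inr y)" for x y
  proof (rule ccontr)
    assume "S (delta x) y \<noteq> 0"
    then have "d1 (Inl x) (Inr y) \<le> max L 0"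
      using L unfolding has_propagation_le_def by force
    then have "\<phi> (d1 (Inl x) (Inr y)) \<le> \<phi> (max L 0)"
      using mono nonneg by (auto intro: mono_onD)
    then show False using far dom[of "Inl x" "Inr y"] by linarith
  qed
  then show ?thesis unfolding finite_propagation_def has_propagation_le_def by blast
qed

lemma M_space_eq_if_coarsely_equivalent:
  assumes "coarsely_equivalent d1 d2"
    and nonneg1: "\<And>z z'. 0 \<le> d1 z z'" and nonneg2: "\<And>z z'. 0 \<le> d2 z z'"
  shows "M_space d1 = M_space d2"
proof -
  obtain \<phi> :: "real \<Rightarrow> real" where mono: "mono_on {0..} \<phi>"
    and dom12: "\<And>z z'. d1 z z' \<le> \<phi> (d2 z z')" and dom21: "\<And>z z'. d2 z z' \<le> \<phi> (d1 z z')"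
    using assms(1) unfolding coarsely_equivalent_def by blast
  have "finite_propagation d2 S" if "finite_propagation d1 S" for S
    using mono nonneg1 dom21 that by (rule finite_propagation_coarse_mono)
  moreover have "finite_propagation d1 S" if "finite_propagation d2 S" for S
    using mono nonneg2 dom12 that by (rule finite_propagation_coarse_mono)
  ultimately show ?thesis by (intro M_space_eqI) blast
qed

lemma coarsely_equivalentI_bdd_above:
  fixes d1 d2 :: "'z \<Rightarrow> 'z \<Rightarrow> real"
  assumes m1: "is_metric d1" and m2: "is_metric d2"
    and b12: "\<And>t. bdd_above {d1 z z' | z z'. d2 z z' \<le> t}"
    and b21: "\<And>t. bdd_above {d2 z z' | z z'. d1 z z' \<le> t}"
  shows "coarsely_equivalent d1 d2"
proof -
  define A where "A t = {d1 z z' | z z'. d2 z z' \<le> t}" for t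
  define B where "B t = {d2 z z' | z z'. d1 z z' \<le> t}" for t
  define \<phi> where "\<phi> t = Sup (A \<bar>t\<bar>) + Sup (B \<bar>t\<bar>) + \<bar>t\<bar>" for t
  obtain z0 :: 'z where True by blast
  have "d1 z0 z0 = 0" "d2 z0 z0 = 0" using m1 m2 unfolding is_metric_def by simp_all
  then have zero: "0 \<in> A t" "0 \<in> B t" if "0 \<le> t" for t
    unfolding A_def B_def using that by (auto intro!: exI[of _ z0])
  have bdd: "bdd_above (A t)" "bdd_above (B t)" for t
    unfolding A_def B_def by (fact b12 b21)+
  have sup_nonneg: "0 \<le> Sup (A \<bar>t\<bar>)" "0 \<le> Sup (B \<bar>t\<bar>)" for t
    using zero[of "\<bar>t\<bar>"] bdd by (auto intro: cSup_upper2)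
  have phi_ge: "t \<le> \<phi> t" "0 \<le> \<phi> t" for t
    unfolding \<phi>_def using sup_nonneg[of t] by linarith+
  have "mono_on {0..} \<phi>"
  proof (rule mono_onI)
    fix s t :: real assume st: "s \<in> {0..}" "t \<in> {0..}" "s \<le> t"
    then have "A s \<subseteq> A t" "B s \<subseteq> B t" unfolding A_def B_def by fastforce+
    then have "Sup (A s) \<le> Sup (A t)" "Sup (B s) \<le> Sup (B t)"
      using zero[of s] bdd st by (auto intro!: cSup_subset_mono)
    then show "\<phi> s \<le> \<phi> t" using st unfolding \<phi>_def by auto
  qed
  moreover have "filterlim \<phi> at_top at_top"
    using phi_ge by (intro filterlim_at_top_mono[OF filterlim_ident] always_eventually) simp
  moreover have "d1 z z' \<le> \<phi> (d2 z z')" "d2 z z' \<le> \<phi> (d1 z z')" for z z'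
  proof -
    have "d1 z z' \<in> A \<bar>d2 z z'\<bar>" "d2 z z' \<in> B \<bar>d1 z z'\<bar>" unfolding A_def B_def by fastforce+
    then have "d1 z z' \<le> Sup (A \<bar>d2 z z'\<bar>)" "d2 z z' \<le> Sup (B \<bar>d1 z z'\<bar>)"
      using bdd by (auto intro: cSup_upper)
    then show "d1 z z' \<le> \<phi> (d2 z z')" "d2 z z' \<le> \<phi> (d1 z z')"
      unfolding \<phi>_def using sup_nonneg by (smt (verit))+
  qed
  ultimately show ?thesis
    unfolding coarsely_equivalent_def using phi_ge(2) by blast
qed

lemma unbounded_obtain_separated_seq:
  fixes F :: "'p \<Rightarrow> real"
  assumes unb: "\<And>v. \<exists>p\<in>P. v < F p" and "0 < c"
  obtains p :: "nat \<Rightarrow> 'p" where "\<And>n. p n \<in> P" "\<And>m n. m < n \<Longrightarrow> F (p m) + c < F (p n)"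
    "\<And>L. \<exists>n. L \<le> F (p n)"
proof -
  have "\<exists>p. \<forall>n. p n \<in> P \<and> F (p n) + c < F (p (Suc n))"
    by (rule dependent_nat_choice) (use unb in auto)
  then obtain p where p: "\<And>n. p n \<in> P" and step: "\<And>n. F (p n) + c < F (p (Suc n))"
    by blast
  have incr: "F (p n) \<le> F (p (Suc n))" for n
    using step[of n] \<open>0 < c\<close> by linarith
  have sep: "F (p m) + c < F (p n)" if "m < n" for m n
    using step[of m] lift_Suc_mono_le[of "\<lambda>k. F (p k)", OF incr Suc_leI[OF that]] by linarith
  have linear: "F (p 0) + real n * c \<le> F (p n)" for n
  proof (induction n)
    case (Suc n)
    then show ?case using step[of n] by (simp add: algebra_simps)
  qed simp
  have grow: "\<exists>n. L \<le> F (p n)" for L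
  proof -
    obtain n where "L - F (p 0) < real n * c" using ex_less_of_nat_mult[OF \<open>0 < c\<close>] by blast
    then show ?thesis using linear[of n] by (intro exI[of _ n]) linarith
  qed
  show ?thesis by (rule that[OF p sep grow])
qed

lemma M_space_ne_if_matching:
  fixes xs :: "nat \<Rightarrow> 'a" and ys :: "nat \<Rightarrow> 'b"
  assumes "inj xs" and "inj ys"
    and near: "\<And>n. d1 (Inl (xs n)) (Inr (ys n)) \<le> R"
    and far: "\<And>L. \<exists>n. L \<le> d2 (Inl (xs n)) (Inr (ys n))"
  shows "M_space d1 \<noteq> M_space d2"
proof -
  define T where "T = pullback_op (xs \<circ> inv ys) (range ys)"
  have T_delta: "T (delta (xs n)) (ys n) = 1" for n
    using \<open>inj ys\<close> by (simp add: T_def pullback_op_delta)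
  have "inj_on (xs \<circ> inv ys) (range ys)"
    using \<open>inj xs\<close> \<open>inj ys\<close> by (simp add: comp_inj_on inj_on_inv_into inj_on_subset)
  then have T_bounded: "bounded_op T" unfolding T_def by (rule bounded_op_pullback_op)
  have "has_propagation_le d1 (R + 1) T"
  proof (unfold T_def, rule has_propagation_le_pullback_op)
    fix y assume "y \<in> range ys"
    then obtain n where "y = ys n" by blast
    then show "d1 (Inl ((xs \<circ> inv ys) y)) (Inr y) < R + 1"
      using near[of n] \<open>inj ys\<close> by simp
  qed
  then have "T \<in> M_space d1"
    using T_bounded by (intro M_space_memI) (auto simp: finite_propagation_def)
  moreover have "T \<notin> M_space d2"
  proof (rule not_in_M_space[OF T_bounded])
    fix L
    obtain n where "L \<le> d2 (Inl (xs n)) (Inr (ys n))" using far by blast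
    then show "\<exists>x y. L \<le> d2 (Inl x) (Inr y) \<and> 1 \<le> norm (T (delta x) y)"
      using T_delta[of n] by (intro exI[of _ "xs n"] exI[of _ "ys n"]) simp
  qed
  ultimately show ?thesis by blast
qed

context
  fixes d1 d2 :: "'a + 'b \<Rightarrow> 'a + 'b \<Rightarrow> real"
  assumes m1: "is_metric d1" and m2: "is_metric d2"
    and agree_X: "\<And>x x'. d1 (Inl x) (Inl x') = d2 (Inl x) (Inl x')"
    and agree_Y: "\<And>y y'. d1 (Inr y) (Inr y') = d2 (Inr y) (Inr y')"
begin

lemma unbounded_cross_distance:
  assumes "\<not> bdd_above {d2 z z' | z z'. d1 z z' \<le> R}"
  shows "\<exists>x y. d1 (Inl x) (Inr y) \<le> R \<and> v < d2 (Inl x) (Inr y)"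
proof (rule ccontr)
  assume "\<not> ?thesis"
  then have cross: "d2 (Inl x) (Inr y) \<le> v" if "d1 (Inl x) (Inr y) \<le> R" for x y
    using that by (meson not_le)
  have sym1: "d1 z z' = d1 z' z" and sym2: "d2 z z' = d2 z' z" for z z'
    using m1 m2 unfolding is_metric_def by auto
  have "d2 z z' \<le> max v R" if "d1 z z' \<le> R" for z z'
  proof (cases z; cases z')
    fix y x assume "z = Inr y" "z' = Inl x"
    then show ?thesis using that cross[of x y] sym1[of z] sym2[of z] by simp
  qed (use that cross agree_X agree_Y in \<open>auto intro: le_max_iff_disj[THEN iffD2]\<close>)
  then have "bdd_above {d2 z z' | z z'. d1 z z' \<le> R}" by (intro bdd_aboveI) blast
  with assms show False by contradiction
qed

lemma inj_if_cross_distance_separated: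
  fixes xs :: "nat \<Rightarrow> 'a" and ys :: "nat \<Rightarrow> 'b"
  assumes near: "\<And>n. d1 (Inl (xs n)) (Inr (ys n)) \<le> R"
    and sep: "\<And>m n. m < n \<Longrightarrow>
      d2 (Inl (xs m)) (Inr (ys m)) + 2 * R < d2 (Inl (xs n)) (Inr (ys n))"
  shows "inj xs" and "inj ys"
proof -
  have sym1: "\<And>z z'. d1 z z' = d1 z' z" and tri1: "\<And>z z' z''. d1 z z'' \<le> d1 z z' + d1 z' z''"
    and tri2: "\<And>z z' z''. d2 z z'' \<le> d2 z z' + d2 z' z''"
    using m1 m2 unfolding is_metric_def by auto
  show "inj xs"
  proof (rule linorder_injI)
    fix m n :: nat assume "m < n"
    show "xs m \<noteq> xs n"
    proof
      assume same: "xs m = xs n"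
      have "d1 (Inr (ys m)) (Inr (ys n)) \<le> 2 * R"
        using tri1[where z = "Inr (ys m)" and z' = "Inl (xs m)" and z'' = "Inr (ys n)"]
          near[of m] near[of n, folded same] sym1[of "Inr (ys m)" "Inl (xs m)"] by linarith
      then have "d2 (Inr (ys m)) (Inr (ys n)) \<le> 2 * R" by (simp add: agree_Y)
      then show False
        using tri2[where z = "Inl (xs m)" and z' = "Inr (ys m)" and z'' = "Inr (ys n)"]
          sep[OF \<open>m < n\<close>] same by simp
    qed
  qed
  show "inj ys"
  proof (rule linorder_injI)
    fix m n :: nat assume "m < n"
    show "ys m \<noteq> ys n"
    proof
      assume same: "ys m = ys n"
      have "d1 (Inl (xs n)) (Inl (xs m)) \<le> 2 * R"
        using tri1[where z = "Inl (xs n)" and z' = "Inr (ys n)" and z'' = "Inl (xs m)"]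
          near[of n] near[of m, unfolded same] sym1[of "Inr (ys n)" "Inl (xs m)"] by linarith
      then have "d2 (Inl (xs n)) (Inl (xs m)) \<le> 2 * R" by (simp add: agree_X)
      then show False
        using tri2[where z = "Inl (xs n)" and z' = "Inl (xs m)" and z'' = "Inr (ys m)"]
          sep[OF \<open>m < n\<close>] same by simp
    qed
  qed
qed

lemma unbounded_obtain_matching:
  assumes unb: "\<not> bdd_above {d2 z z' | z z'. d1 z z' \<le> R}"
  obtains xs :: "nat \<Rightarrow> 'a" and ys :: "nat \<Rightarrow> 'b" where "inj xs" "inj ys"
    "\<And>n. d1 (Inl (xs n)) (Inr (ys n)) \<le> R" "\<And>L. \<exists>n. L \<le> d2 (Inl (xs n)) (Inr (ys n))"
proof -
  let ?P = "{(x, y). d1 (Inl x) (Inr y) \<le> R}"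
  let ?F = "\<lambda>(x, y). d2 (Inl x) (Inr y)"
  have unb': "\<exists>p\<in>?P. v < ?F p" for v
    using unbounded_cross_distance[OF unb, of v] by auto
  then obtain x y where "d1 (Inl x) (Inr y) \<le> R" by blast
  then have "0 \<le> R" using m1 unfolding is_metric_def by (meson order.trans)
  then obtain p :: "nat \<Rightarrow> 'a \<times> 'b" where p: "\<And>n. p n \<in> ?P"
    and sep: "\<And>m n. m < n \<Longrightarrow> ?F (p m) + (2 * R + 1) < ?F (p n)"
    and grow: "\<And>L. \<exists>n. L \<le> ?F (p n)"
    using unbounded_obtain_separated_seq[OF unb', of "2 * R + 1"] by auto
  define xs where "xs n = fst (p n)" for n
  define ys where "ys n = snd (p n)" for n
  have pair: "p n = (xs n, ys n)" for n by (simp add: xs_def ys_def)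
  have near: "d1 (Inl (xs n)) (Inr (ys n)) \<le> R" for n
    using p[of n] by (simp add: pair)
  have "d2 (Inl (xs m)) (Inr (ys m)) + 2 * R < d2 (Inl (xs n)) (Inr (ys n))" if "m < n" for m n
    using sep[OF that] by (simp add: pair)
  then have "inj xs" "inj ys" by (fact inj_if_cross_distance_separated[OF near])+
  moreover have "\<exists>n. L \<le> d2 (Inl (xs n)) (Inr (ys n))" for L
    using grow[of L] by (simp add: pair)
  ultimately show ?thesis using near that by blast
qed

lemma M_space_ne_if_unbounded:
  assumes "\<not> bdd_above {d2 z z' | z z'. d1 z z' \<le> R}"
  shows "M_space d1 \<noteq> M_space d2"
  using unbounded_obtain_matching[OF assms] M_space_ne_if_matching by metis

end

theorem mainTheorem4:
  fixes dX :: "'a::countable \<Rightarrow> 'a \<Rightarrow> real"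
    and d1 d2 :: "'a + 'b::countable \<Rightarrow> 'a + 'b \<Rightarrow> real"
  assumes "is_metric dX" and "discrete_metric dX"
    and "is_metric d1" and "is_metric d2"
    and "\<And>x x'. d1 (Inl x) (Inl x') = dX x x'"
    and "\<And>x x'. d2 (Inl x) (Inl x') = dX x x'"
    and "\<And>y y'. d1 (Inr y) (Inr y') = d2 (Inr y) (Inr y')"
  shows "coarsely_equivalent d1 d2 \<longleftrightarrow> M_space d1 = M_space d2"
proof
  assume "coarsely_equivalent d1 d2"
  then show "M_space d1 = M_space d2"
    by (rule M_space_eq_if_coarsely_equivalent) (use assms(3,4) in \<open>auto simp: is_metric_def\<close>)
next
  have agree_X: "\<And>x x'. d1 (Inl x) (Inl x') = d2 (Inl x) (Inl x')" using assms(5,6) by simp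
  assume same: "M_space d1 = M_space d2"
  show "coarsely_equivalent d1 d2"
  proof (rule coarsely_equivalentI_bdd_above[OF assms(3,4)])
    show "bdd_above {d2 z z' | z z'. d1 z z' \<le> t}" for t
      using M_space_ne_if_unbounded[OF assms(3,4) agree_X assms(7), where R = t] same by metis
    show "bdd_above {d1 z z' | z z'. d2 z z' \<le> t}" for t
      using M_space_ne_if_unbounded[OF assms(4,3) agree_X[symmetric] assms(7)[symmetric], where R = t]
        same by metis
  qed
qed

end
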